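(* Let $a>0$ be a constant and let $x\in\{0,1\}^n$ have exactly $(\frac12+a)n$ bits equal to $1$. Let $x^k$ denote the $k$-th bitstring sampled by the hypermutation operator on input $x$, $k=1,\dots,n$. Then for any $c=\omega(\sqrt{\log n/n})$ with $c\in(0,a)$, with probability $1-e^{-\Omega(nc^2)}$ there exists $k\in\{n\frac{a-c}{2a-c},\dots,n\frac{a}{2a-c}\}$ such that $x^k$ has exactly $n/2$ bits equal to $1$.
   Context: The hypermutation operator on input $x\in\{0,1\}^n$ (disregarding its stopping rule) flips the $n$ bit positions one at a time in a uniformly random order, i.e. according to a uniformly random permutation of $\{1,\dots,n\}$; the $k$-th sampled bitstring $x^k$ is the string obtained from $x$ after the first $k$ of these flips. Asymptotics are as $n\to\infty$. *)

theory Defs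
  imports "HOL-Probability.Probability" "HOL-Library.Landau_Symbols"
begin

definition ones :: "bool list \<Rightarrow> nat" where
  "ones x = length (filter id x)"

text \<open>The k-th bitstring sampled by the hypermutation operator when the bit positions
  are flipped in the order given by the permutation \<sigma> of {0..<n}: positions
  \<sigma> 0, ..., \<sigma> (k-1) are flipped.\<close>
definition hyp_sample :: "(nat \<Rightarrow> nat) \<Rightarrow> nat \<Rightarrow> bool list \<Rightarrow> bool list" where
  "hyp_sample \<sigma> k x = map (\<lambda>i. if i \<in> \<sigma> ` {..<k} then \<not> x ! i else x ! i) [0..<length x]"

definition rand_perm :: "nat \<Rightarrow> (nat \<Rightarrow> nat) pmf" where
  "rand_perm n = pmf_of_set {\<sigma>. \<sigma> permutes {..<n}}"

end

theory Submission
  imports Defs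
begin

(* Let m = (1/2 + a) n be the number of ones of x. After k flips the number of ones is m + k - 2 H_k,
   where H_k counts the one-bits among the first k flipped positions. It changes by at most one per
   flip, so it hits n/2 somewhere in [k1, k2] as soon as it is at least n/2 at k1 = ceil (n (a-c)/(2a-c))
   and at most n/2 at k2 = floor (n a/(2a-c)). Each of these two conditions fails only if a
   hypergeometric count (ones among the first k1, zeros among the first k2 flipped positions) exceeds
   its mean by t = n c/8, which by Hoeffding's bound for sampling without replacement has probability
   at most exp (-2 t^2/k) <= exp (-n c^2/32). That bound follows from the Chernoff argument for
   independent draws, because a random arrangement of n elements places elements of a b-element set
   at j prescribed positions with probability (b choose j)/(n choose j) <= (b/n)^j. *)

section \<open>Arrangements placing a set at prescribed positions\<close>

lemma card_permutations_of_set_filter_Cons: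
  assumes "finite A" "A \<noteq> {}"
  shows "card {ys \<in> permutations_of_set A. P ys} =
         (\<Sum>x\<in>A. card {xs \<in> permutations_of_set (A - {x}). P (x # xs)})"
proof -
  have "{ys \<in> permutations_of_set A. P ys} =
        (\<Union>x\<in>A. (#) x ` {xs \<in> permutations_of_set (A - {x}). P (x # xs)})"
    using permutations_of_set_nonempty[OF assms(2)] by auto
  then show ?thesis
    using assms(1) by (simp only:) (subst card_UN_disjoint, auto simp: card_image)
qed

lemma all_nth_Cons_in_iff:
  "(\<forall>i\<in>T. (x # xs) ! i \<in> B) \<longleftrightarrow> (0 \<in> T \<longrightarrow> x \<in> B) \<and> (\<forall>i\<in>{i. Suc i \<in> T}. xs ! i \<in> B)"
  by (auto simp: nth_Cons split: nat.splits)

lemma card_Suc_preimage: "card {i. Suc i \<in> T} = card (T - {0})"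
proof -
  have "T - {0} = Suc ` {i. Suc i \<in> T}"
    by (auto simp: image_iff) (metis not0_implies_Suc)
  then show ?thesis
    by (simp add: card_image)
qed

lemma card_permutations_of_set_nth_in_Cons:
  assumes "finite A" "A \<noteq> {}"
  shows "card {ys \<in> permutations_of_set A. \<forall>i\<in>T. ys ! i \<in> B}
       = (\<Sum>x | x \<in> A \<and> (0 \<in> T \<longrightarrow> x \<in> B).
            card {xs \<in> permutations_of_set (A - {x}). \<forall>i\<in>{i. Suc i \<in> T}. xs ! i \<in> B})"
  unfolding card_permutations_of_set_filter_Cons[OF assms] all_nth_Cons_in_iff sum.inter_filter[OF assms(1)]
  by (intro sum.cong) auto

lemma card_remove_Int:
  assumes "finite A" "x \<in> A"
  shows "card ((A - {x}) \<inter> B) = (if x \<in> B then card (A \<inter> B) - 1 else card (A \<inter> B))"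
  using assms by (simp add: Int_Diff[symmetric] Diff_Int_distrib2)

lemma sum_choose_card_remove_Int:
  assumes "finite A"
  shows "(\<Sum>x\<in>A. card ((A - {x}) \<inter> B) choose j)
       = card (A \<inter> B) * (card (A \<inter> B) - 1 choose j) + card (A - B) * (card (A \<inter> B) choose j)"
proof -
  have "(\<Sum>x\<in>A. card ((A - {x}) \<inter> B) choose j)
      = (\<Sum>x\<in>A. if x \<in> B then card (A \<inter> B) - 1 choose j else card (A \<inter> B) choose j)"
    using assms by (intro sum.cong) (auto simp: card_remove_Int)
  then show ?thesis
    using assms by (simp add: sum.If_cases Int_def Diff_eq)
qed

lemma sum_choose_card_remove_Int_in:
  assumes "finite A"
  shows "(\<Sum>x\<in>A \<inter> B. card ((A - {x}) \<inter> B) choose j) = card (A \<inter> B) * (card (A \<inter> B) - 1 choose j)"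
proof -
  have "(\<Sum>x\<in>A \<inter> B. card ((A - {x}) \<inter> B) choose j) = (\<Sum>x\<in>A \<inter> B. card (A \<inter> B) - 1 choose j)"
    using assms by (intro sum.cong) (auto simp: card_remove_Int)
  then show ?thesis
    by simp
qed

(* The two cases of the induction step of card_permutations_of_set_nth_in, with b = card (A Int B):
   position 0 lies in T or it does not. *)
lemma mult_choose_Suc_Suc_eqI:
  fixes C N b j :: nat
  assumes "C * (N choose j) = fact N * (b * (b - 1 choose j))"
  shows "C * (Suc N choose Suc j) = fact (Suc N) * (b choose Suc j)"
proof -
  have "Suc j * (C * (Suc N choose Suc j)) = C * (Suc N * (N choose j))"
    by (simp only: mult.left_commute[of "Suc j"] binomial_absorption diff_Suc_1)
  also have "\<dots> = Suc N * (fact N * (b * (b - 1 choose j)))"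
    by (simp only: mult.left_commute[of C] assms)
  also have "\<dots> = Suc j * (fact (Suc N) * (b choose Suc j))"
    by (simp only: binomial_absorption[symmetric] fact_Suc of_nat_id ac_simps)
  finally show ?thesis
    by (simp only: mult_cancel1) simp
qed

lemma mult_choose_Suc_eqI:
  fixes C N b j :: nat
  assumes "j \<le> N" "b \<le> Suc N"
    and "C * (N choose j) = fact N * (b * (b - 1 choose j) + (Suc N - b) * (b choose j))"
  shows "C * (Suc N choose j) = fact (Suc N) * (b choose j)"
proof -
  have split: "b * (b - 1 choose j) + (Suc N - b) * (b choose j) = (Suc N - j) * (b choose j)"
  proof (cases "j \<le> b")
    case True
    then have "Suc N - j = (b - j) + (Suc N - b)"
      using assms(2) by arith
    then show ?thesis
      using binomial_absorb_comp[of b j] by (simp add: add_mult_distrib)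
  next
    case False
    then show ?thesis
      by (simp add: binomial_eq_0)
  qed
  have "(Suc N - j) * (C * (Suc N choose j)) = C * (Suc N * (N choose j))"
    by (simp only: mult.left_commute[of "Suc N - j"] binomial_absorb_comp diff_Suc_1)
  also have "\<dots> = Suc N * (fact N * ((Suc N - j) * (b choose j)))"
    by (simp only: mult.left_commute[of C] assms(3) split)
  also have "\<dots> = (Suc N - j) * (fact (Suc N) * (b choose j))"
    by (simp only: fact_Suc of_nat_id ac_simps)
  finally show ?thesis
    using assms(1) by (simp only: mult_cancel1) simp
qed

lemma card_permutations_of_set_nth_in:
  assumes "finite A" "T \<subseteq> {..<card A}"
  shows "card {ys \<in> permutations_of_set A. \<forall>i\<in>T. ys ! i \<in> B} * (card A choose card T)
       = fact (card A) * (card (A \<inter> B) choose card T)"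
  using assms
proof (induction "card A" arbitrary: A T)
  case 0
  then show ?case
    by simp
next
  case (Suc N A T)
  define T' where "T' = {i. Suc i \<in> T}"
  define H where "H = {x. x \<in> A \<and> (0 \<in> T \<longrightarrow> x \<in> B)}"
  define b where "b = card (A \<inter> B)"
  define j where "j = card T'"
  have A: "finite A" "A \<noteq> {}" "card A = Suc N"
    using Suc by auto
  have T': "T' \<subseteq> {..<N}"
    using Suc.prems(2) A(3) by (auto simp: T'_def)
  have IH: "card {xs \<in> permutations_of_set (A - {x}). \<forall>i\<in>T'. xs ! i \<in> B} * (N choose j)
      = fact N * (card ((A - {x}) \<inter> B) choose j)" if "x \<in> A" for x
    using Suc.hyps(1)[of "A - {x}" T'] T' A that unfolding j_def by simp
  note split_head = card_permutations_of_set_nth_in_Cons[OF A(1,2), of T B, folded T'_def H_def]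
  have count: "card {ys \<in> permutations_of_set A. \<forall>i\<in>T. ys ! i \<in> B} * (N choose j)
      = fact N * (\<Sum>x\<in>H. card ((A - {x}) \<inter> B) choose j)"
    unfolding split_head sum_distrib_left sum_distrib_right by (intro sum.cong) (auto simp: H_def IH)
  have "j \<le> N" "b \<le> Suc N"
    using card_mono[OF finite_lessThan T'] card_mono[OF A(1), of "A \<inter> B"] A(3)
    unfolding j_def b_def by auto
  show ?case
  proof (cases "0 \<in> T")
    case True
    then have "card T = Suc j"
      using card_Suc_preimage[of T] Suc.prems finite_subset unfolding j_def T'_def
      by (metis card_Suc_Diff1 finite_lessThan)
    moreover have "H = A \<inter> B"
      using True unfolding H_def by auto
    ultimately show ?thesis
      using count mult_choose_Suc_Suc_eqI sum_choose_card_remove_Int_in[OF A(1)] A(3) unfolding b_def by simp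
  next
    case False
    then have "card T = j"
      using card_Suc_preimage[of T] unfolding j_def T'_def by simp
    moreover have "(\<Sum>x\<in>H. card ((A - {x}) \<inter> B) choose j) = b * (b - 1 choose j) + (Suc N - b) * (b choose j)"
      using False sum_choose_card_remove_Int[OF A(1), of B j] card_Diff_subset_Int[of A B] A
      unfolding H_def b_def by simp
    ultimately show ?thesis
      using count mult_choose_Suc_eqI \<open>j \<le> N\<close> \<open>b \<le> Suc N\<close> A(3) unfolding b_def by simp
  qed
qed

lemma binomial_mult_power_le:
  assumes "b \<le> n"
  shows "real (b choose j) * real n ^ j \<le> real (n choose j) * real b ^ j"
proof (cases "j \<le> b")
  case False
  then show ?thesis
    by (simp add: binomial_eq_0)
next
  case True
  have "fact j * (real (b choose j) * real n ^ j) = (\<Prod>i<j. (real b - real i) * real n)"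
    by (simp add: binomial_gbinomial gbinomial_mult_fact prod.distrib atLeast0LessThan)
  also have "\<dots> \<le> (\<Prod>i<j. (real n - real i) * real b)"
  proof (intro prod_mono conjI)
    fix i assume "i \<in> {..<j}"
    then have "real i * real b \<le> real i * real n" "real i \<le> real b"
      using True assms by (auto intro: mult_left_mono)
    then show "0 \<le> (real b - real i) * real n" "(real b - real i) * real n \<le> (real n - real i) * real b"
      by (simp, simp add: algebra_simps)
  qed
  also have "\<dots> = fact j * (real (n choose j) * real b ^ j)"
    by (simp add: binomial_gbinomial gbinomial_mult_fact prod.distrib atLeast0LessThan)
  finally show ?thesis
    by simp
qed

lemma card_permutations_of_set_nth_in_le:
  assumes "finite A" "T \<subseteq> {..<card A}"
  shows "real (card {ys \<in> permutations_of_set A. \<forall>i\<in>T. ys ! i \<in> B})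
       \<le> fact (card A) * (real (card (A \<inter> B)) / real (card A)) ^ card T"
proof (cases "A = {}")
  case True
  then show ?thesis
    using assms by simp
next
  case False
  define n where "n = card A"
  have n: "n > 0" "card T \<le> n" "card (A \<inter> B) \<le> n"
    using False assms card_mono[OF finite_lessThan assms(2)] card_mono[of A "A \<inter> B"]
    unfolding n_def by auto
  have "real (card {ys \<in> permutations_of_set A. \<forall>i\<in>T. ys ! i \<in> B}) * (real (n choose card T) * real n ^ card T)
      = fact n * (real (card (A \<inter> B) choose card T) * real n ^ card T)"
    using arg_cong[OF card_permutations_of_set_nth_in[OF assms, of B], of real] unfolding n_def
    by (simp add: ac_simps)
  also have "\<dots> \<le> fact n * (real (n choose card T) * real (card (A \<inter> B)) ^ card T)"
    using binomial_mult_power_le[OF n(3)] by (intro mult_left_mono) auto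
  finally show ?thesis
    using n unfolding n_def[symmetric] by (simp add: field_simps)
qed

section \<open>Hoeffding's bound for sampling without replacement\<close>

lemma prod_of_bool:
  assumes "finite X"
  shows "(\<Prod>i\<in>X. of_bool (P i) :: 'a :: comm_semiring_1) = of_bool (\<forall>i\<in>X. P i)"
  using assms by (induction X rule: finite_induct) auto

lemma sum_Pow_power_card:
  fixes x :: "'a :: comm_semiring_1"
  shows "(\<Sum>X\<in>Pow {..<k}. x ^ card X) = (1 + x) ^ k"
  using prod_add[of "{..<k}" "\<lambda>_. x" "\<lambda>_. 1"] by (simp add: add.commute)

lemma sum_permutations_of_set_prod_le:
  assumes "finite A" "k \<le> card A" "u \<ge> 0"
  shows "(\<Sum>ys\<in>permutations_of_set A. \<Prod>i<k. 1 + u * of_bool (ys ! i \<in> B))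
       \<le> fact (card A) * (1 + u * (real (card (A \<inter> B)) / real (card A))) ^ k"
proof -
  define p where "p = real (card (A \<inter> B)) / real (card A)"
  have expand: "(\<Prod>i<k. 1 + u * of_bool (ys ! i \<in> B))
      = (\<Sum>X\<in>Pow {..<k}. u ^ card X * of_bool (\<forall>i\<in>X. ys ! i \<in> B))" for ys
    using prod_add[of "{..<k}" "\<lambda>i. u * of_bool (ys ! i \<in> B)" "\<lambda>_. 1"]
    by (simp add: add.commute prod.distrib prod_of_bool finite_subset)
  have "(\<Sum>ys\<in>permutations_of_set A. \<Prod>i<k. 1 + u * of_bool (ys ! i \<in> B))
      = (\<Sum>X\<in>Pow {..<k}. u ^ card X * real (card {ys \<in> permutations_of_set A. \<forall>i\<in>X. ys ! i \<in> B}))"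
    unfolding expand
    by (subst sum.swap) (simp add: sum_distrib_left[symmetric] Int_def del: sum_mult_of_bool_eq)
  also have "\<dots> \<le> (\<Sum>X\<in>Pow {..<k}. u ^ card X * (fact (card A) * p ^ card X))"
  proof (intro sum_mono mult_left_mono)
    fix X assume "X \<in> Pow {..<k}"
    then have "X \<subseteq> {..<card A}"
      using assms(2) by auto
    then show "real (card {ys \<in> permutations_of_set A. \<forall>i\<in>X. ys ! i \<in> B}) \<le> fact (card A) * p ^ card X"
      unfolding p_def by (rule card_permutations_of_set_nth_in_le[OF assms(1)])
  qed (use assms in auto)
  also have "\<dots> = fact (card A) * (1 + u * p) ^ k"
    by (simp add: sum_distrib_left power_mult_distrib sum_Pow_power_card[symmetric] ac_simps)
  finally show ?thesis
    unfolding p_def .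
qed

lemma exp_mult_card_take_Int:
  assumes "ys \<in> permutations_of_set A" "k \<le> length ys"
  shows "exp (h * real (card (set (take k ys) \<inter> B))) = (\<Prod>i<k. 1 + (exp h - 1) * of_bool (ys ! i \<in> B))"
proof -
  have "set (take k ys) \<inter> B = (!) ys ` {i \<in> {..<k}. ys ! i \<in> B}"
    using assms(2) by (auto simp: set_conv_nth) (metis nth_take)
  moreover have "inj_on ((!) ys) {i \<in> {..<k}. ys ! i \<in> B}"
    using assms by (intro inj_on_nth) (auto simp: permutations_of_set_def)
  ultimately have "card (set (take k ys) \<inter> B) = card {i \<in> {..<k}. ys ! i \<in> B}"
    by (simp add: card_image)
  then have "exp (h * real (card (set (take k ys) \<inter> B))) = (\<Prod>i<k. if ys ! i \<in> B then exp h else 1)"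
    by (simp add: prod.If_cases Int_def exp_of_nat_mult[symmetric] mult.commute)
  also have "\<dots> = (\<Prod>i<k. 1 + (exp h - 1) * of_bool (ys ! i \<in> B))"
    by (intro prod.cong) auto
  finally show ?thesis .
qed

lemma prob_permutations_of_set_take_Int_ge:
  assumes "finite A" "0 < k" "k \<le> card A" "t > 0"
  shows "measure_pmf.prob (pmf_of_set (permutations_of_set A))
           {ys. real (card (set (take k ys) \<inter> B)) \<ge> real k * (real (card (A \<inter> B)) / real (card A)) + t}
         \<le> exp (- 2 * t\<^sup>2 / real k)"
proof -
  define M where "M = pmf_of_set (permutations_of_set A)"
  define p where "p = real (card (A \<inter> B)) / real (card A)"
  define h where "h = 4 * t / real k"
  define X where "X ys = real (card (set (take k ys) \<inter> B))" for ys
  have S: "permutations_of_set A \<noteq> {}" "finite (permutations_of_set A)"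
    using assms(1) by auto
  have h: "h > 0" "p \<ge> 0"
    using assms unfolding h_def p_def by auto
  have Chernoff: "measure_pmf.prob M {ys. X ys \<ge> real k * p + t}
      \<le> exp (- h * (real k * p + t)) * (\<integral>ys. exp (h * X ys) \<partial>M)"
    using measure_pmf.Chernoff_ineq_ge[where M = M and s = h and A = UNIV and f = X and a = "real k * p + t"] h(1) S
    by (simp add: M_def set_integrable_def integrable_measure_pmf_finite set_lebesgue_integral_def)
  have "(\<integral>ys. exp (h * X ys) \<partial>M)
      = (\<Sum>ys\<in>permutations_of_set A. \<Prod>i<k. 1 + (exp h - 1) * of_bool (ys ! i \<in> B)) / fact (card A)"
    unfolding M_def integral_pmf_of_set[OF S] X_def using assms(3)
    by (simp add: exp_mult_card_take_Int length_finite_permutations_of_set assms(1) cong: sum.cong)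
  also have "\<dots> \<le> (1 + (exp h - 1) * p) ^ k"
    using sum_permutations_of_set_prod_le[OF assms(1,3), of "exp h - 1" B] h(1)
    unfolding p_def by (simp add: divide_le_eq mult.commute)
  also have "\<dots> \<le> exp (h * p + h\<^sup>2 / 8) ^ k"
  proof (intro power_mono)
    have "ln (1 + (exp h - 1) * p) \<le> h * p + h\<^sup>2 / 8"
      using Hoeffdings_lemma_aux[of h p] h by (simp add: mult.commute)
    moreover have "0 < 1 + (exp h - 1) * p"
      using h by (simp add: add_pos_nonneg)
    ultimately show "1 + (exp h - 1) * p \<le> exp (h * p + h\<^sup>2 / 8)"
      by (metis exp_le_cancel_iff exp_ln)
  qed (use h in auto)
  finally have mgf: "(\<integral>ys. exp (h * X ys) \<partial>M) \<le> exp (h * p + h\<^sup>2 / 8) ^ k" .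
  have "- h * (real k * p + t) + real k * (h * p + h\<^sup>2 / 8) = - 2 * t\<^sup>2 / real k"
    using assms(2) unfolding h_def by (simp add: field_simps power2_eq_square)
  then have "exp (- h * (real k * p + t)) * exp (h * p + h\<^sup>2 / 8) ^ k = exp (- 2 * t\<^sup>2 / real k)"
    by (simp only: exp_of_nat_mult[symmetric] exp_add[symmetric])
  then show ?thesis
    using order_trans[OF Chernoff mult_left_mono[OF mgf]] unfolding M_def X_def p_def by simp
qed

lemma inj_on_map_upt_permutes: "inj_on (\<lambda>\<sigma>. map \<sigma> [0..<n]) {\<sigma>. \<sigma> permutes {..<n}}"
proof (rule inj_onI, rule ext)
  fix \<sigma> \<tau> i
  assume perms: "\<sigma> \<in> {\<sigma>. \<sigma> permutes {..<n}}" "\<tau> \<in> {\<sigma>. \<sigma> permutes {..<n}}"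
    and eq: "map \<sigma> [0..<n] = map \<tau> [0..<n]"
  show "\<sigma> i = \<tau> i"
  proof (cases "i < n")
    case True
    then show ?thesis
      using arg_cong[OF eq, of "\<lambda>xs. xs ! i"] by simp
  next
    case False
    then show ?thesis
      using perms permutes_not_in[of \<sigma> "{..<n}" i] permutes_not_in[of \<tau> "{..<n}" i] by simp
  qed
qed

lemma set_pmf_rand_perm: "set_pmf (rand_perm n) = {\<sigma>. \<sigma> permutes {..<n}}"
  unfolding rand_perm_def
  using finite_permutations[of "{..<n}"] permutes_id[of "{..<n}"] by (intro set_pmf_of_set) blast+

lemma map_pmf_rand_perm: "map_pmf (\<lambda>\<sigma>. map \<sigma> [0..<n]) (rand_perm n) = pmf_of_set (permutations_of_set {..<n})"
proof -
  let ?f = "\<lambda>\<sigma>. map \<sigma> [0..<n]"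
  have perms: "finite {\<sigma>. \<sigma> permutes {..<n}}" "{\<sigma>. \<sigma> permutes {..<n}} \<noteq> {}"
    using finite_permutations[of "{..<n}"] permutes_id[of "{..<n}"] by blast+
  have "[0..<n] \<in> permutations_of_set {..<n}"
    by (auto simp: permutations_of_set_def)
  then have "?f ` {\<sigma>. \<sigma> permutes {..<n}} \<subseteq> permutations_of_set {..<n}"
    using permutations_of_set_image_permutes by blast
  moreover have "card (?f ` {\<sigma>. \<sigma> permutes {..<n}}) = card (permutations_of_set {..<n})"
    using inj_on_map_upt_permutes by (simp add: card_image card_permutations)
  ultimately have "?f ` {\<sigma>. \<sigma> permutes {..<n}} = permutations_of_set {..<n}"
    by (intro card_subset_eq) auto
  then show ?thesis
    unfolding rand_perm_def using map_pmf_of_set_inj[OF inj_on_map_upt_permutes perms(2,1)] by simp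
qed

lemma prob_rand_perm_image_Int_ge:
  assumes "0 < k" "k \<le> n" "t > 0"
  shows "measure_pmf.prob (rand_perm n)
           {\<sigma>. real (card (\<sigma> ` {..<k} \<inter> B)) \<ge> real k * (real (card ({..<n} \<inter> B)) / real n) + t}
         \<le> exp (- 2 * t\<^sup>2 / real k)"
proof -
  have "set (take k (map \<sigma> [0..<n])) = \<sigma> ` {..<k}" for \<sigma> :: "nat \<Rightarrow> nat"
    using assms(2) by (auto simp: take_map atLeast0LessThan)
  then have "{\<sigma>. real (card (\<sigma> ` {..<k} \<inter> B)) \<ge> real k * (real (card ({..<n} \<inter> B)) / real n) + t}
      = (\<lambda>\<sigma>. map \<sigma> [0..<n]) -`
          {ys. real (card (set (take k ys) \<inter> B)) \<ge> real k * (real (card ({..<n} \<inter> B)) / real n) + t}"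
    by auto
  then show ?thesis
    using prob_permutations_of_set_take_Int_ge[of "{..<n}" k t B] assms
    by (simp flip: map_pmf_rand_perm)
qed

section \<open>Hypermutation\<close>

definition one_bits :: "bool list \<Rightarrow> nat set" where
  "one_bits x = {i. i < length x \<and> x ! i}"

lemma one_bits_subset: "one_bits x \<subseteq> {..<length x}"
  by (auto simp: one_bits_def)

lemma card_one_bits: "card (one_bits x) = ones x"
  by (simp add: one_bits_def ones_def length_filter_conv_card)

lemma card_lessThan_Int_one_bits:
  "card ({..<length x} \<inter> one_bits x) = ones x"
  "card ({..<length x} \<inter> - one_bits x) = length x - ones x"
proof -
  have "{..<length x} \<inter> one_bits x = one_bits x" "{..<length x} \<inter> - one_bits x = {..<length x} - one_bits x"
    using one_bits_subset[of x] by blast+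
  then show "card ({..<length x} \<inter> one_bits x) = ones x"
    "card ({..<length x} \<inter> - one_bits x) = length x - ones x"
    using one_bits_subset[of x] finite_subset[OF one_bits_subset[of x]]
    by (simp_all add: card_one_bits card_Diff_subset)
qed

lemma ones_le_length: "ones x \<le> length x"
  unfolding ones_def by simp

lemma ones_hyp_sample:
  "ones (hyp_sample \<sigma> k x) + card (\<sigma> ` {..<k} \<inter> one_bits x)
   = ones x + card (\<sigma> ` {..<k} \<inter> {..<length x} - one_bits x)"
proof -
  define S where "S = \<sigma> ` {..<k} \<inter> {..<length x}"
  define I where "I = one_bits x"
  have fin: "finite S" "finite I"
    using one_bits_subset[of x] finite_subset unfolding S_def I_def by auto
  have "ones (hyp_sample \<sigma> k x) = card ((I - S) \<union> (S - I))"
    unfolding ones_def hyp_sample_def length_filter_conv_card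
    by (intro arg_cong[where f = card]) (auto simp: S_def I_def one_bits_def)
  also have "\<dots> = card (I - S) + card (S - I)"
    using fin by (intro card_Un_disjoint) auto
  finally have "ones (hyp_sample \<sigma> k x) = card (I - S) + card (S - I)" .
  moreover have "card I = card (I - S) + card (S \<inter> I)"
    using card_Diff_subset_Int[of I S] card_mono[of I "S \<inter> I"] fin by (auto simp: Int_commute)
  moreover have "\<sigma> ` {..<k} \<inter> I = S \<inter> I"
    using one_bits_subset[of x] unfolding S_def I_def by auto
  ultimately show ?thesis
    unfolding S_def[symmetric] I_def[symmetric] card_one_bits[symmetric] by simp
qed

lemma ones_hyp_sample_Suc:
  "\<bar>int (ones (hyp_sample \<sigma> (Suc k) x)) - int (ones (hyp_sample \<sigma> k x))\<bar> \<le> 1"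
proof -
  define I where "I = one_bits x"
  define D where "D S = int (card (S \<inter> {..<length x} - I)) - int (card (S \<inter> I))" for S
  have ones: "int (ones (hyp_sample \<sigma> j x)) = int (ones x) + D (\<sigma> ` {..<j})" for j
    using ones_hyp_sample[of \<sigma> j x] unfolding D_def I_def by linarith
  have "finite I"
    using one_bits_subset[of x] finite_subset unfolding I_def by auto
  then have "\<bar>D (insert (\<sigma> k) (\<sigma> ` {..<k})) - D (\<sigma> ` {..<k})\<bar> \<le> 1"
    using one_bits_subset[of x] unfolding D_def I_def
    by (cases "\<sigma> k \<in> \<sigma> ` {..<k}"; cases "\<sigma> k \<in> one_bits x"; cases "\<sigma> k < length x")
      (auto simp: insert_Diff_if card_insert_if)
  then show ?thesis
    using ones by (simp add: lessThan_Suc)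
qed

lemma hyp_sample_crosses_half:
  assumes "k1 \<le> k2" "even n"
    and "n \<le> 2 * ones (hyp_sample \<sigma> k1 x)" "2 * ones (hyp_sample \<sigma> k2 x) \<le> n"
  shows "\<exists>k. k1 \<le> k \<and> k \<le> k2 \<and> 2 * ones (hyp_sample \<sigma> k x) = n"
proof -
  have "\<exists>k. k1 \<le> k \<and> k \<le> k2 \<and> - int (ones (hyp_sample \<sigma> k x)) = - int (n div 2)"
    using assms ones_hyp_sample_Suc[of \<sigma> _ x]
    by (intro nat_intermed_int_val) (auto simp: abs_minus_commute)
  then show ?thesis
    using assms(2) by auto
qed

lemma ones_hyp_sample_permutes:
  assumes "\<sigma> permutes {..<length x}" "k \<le> length x"
  shows "ones (hyp_sample \<sigma> k x) + card (\<sigma> ` {..<k} \<inter> one_bits x)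
           = ones x + card (\<sigma> ` {..<k} \<inter> - one_bits x)"
    and "card (\<sigma> ` {..<k} \<inter> one_bits x) + card (\<sigma> ` {..<k} \<inter> - one_bits x) = k"
proof -
  have S: "\<sigma> ` {..<k} \<subseteq> {..<length x}" "card (\<sigma> ` {..<k}) = k"
    using assms permutes_image[OF assms(1)] permutes_inj_on[OF assms(1)]
    by (auto simp: card_image inj_on_subset)
  then show "ones (hyp_sample \<sigma> k x) + card (\<sigma> ` {..<k} \<inter> one_bits x)
           = ones x + card (\<sigma> ` {..<k} \<inter> - one_bits x)"
    using ones_hyp_sample[of \<sigma> k x] by (simp add: Diff_eq Int_absorb2)
  show "card (\<sigma> ` {..<k} \<inter> one_bits x) + card (\<sigma> ` {..<k} \<inter> - one_bits x) = k"
    using S card_Un_disjoint[of "\<sigma> ` {..<k} \<inter> one_bits x" "\<sigma> ` {..<k} \<inter> - one_bits x"]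
    by (simp add: Int_Un_distrib[symmetric])
qed

lemma hyp_sample_hits_half:
  fixes a t :: real
  assumes \<sigma>: "\<sigma> permutes {..<length x}"
    and x: "even (length x)" "real (ones x) = (1/2 + a) * real (length x)"
    and k: "k1 \<le> k2" "k2 \<le> length x"
      "t \<le> a * (real (length x) / 2 - real k1)" "t \<le> a * (real k2 - real (length x) / 2)"
    and hits: "real (card (\<sigma> ` {..<k1} \<inter> one_bits x)) < real k1 * (1/2 + a) + t"
      "real (card (\<sigma> ` {..<k2} \<inter> - one_bits x)) < real k2 * (1/2 - a) + t"
  shows "\<exists>k. k1 \<le> k \<and> k \<le> k2 \<and> 2 * ones (hyp_sample \<sigma> k x) = length x"
proof (rule hyp_sample_crosses_half[OF k(1) x(1)])
  have "real (ones (hyp_sample \<sigma> k1 x)) + real (card (\<sigma> ` {..<k1} \<inter> one_bits x))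
      = real (ones x) + real k1 - real (card (\<sigma> ` {..<k1} \<inter> one_bits x))"
    using ones_hyp_sample_permutes[OF \<sigma>, of k1] k by linarith
  then show "length x \<le> 2 * ones (hyp_sample \<sigma> k1 x)"
    using x(2) k(3) hits(1) by (simp add: algebra_simps) 
  have "real (ones (hyp_sample \<sigma> k2 x)) + real k2 - real (card (\<sigma> ` {..<k2} \<inter> - one_bits x))
      = real (ones x) + real (card (\<sigma> ` {..<k2} \<inter> - one_bits x))"
    using ones_hyp_sample_permutes[OF \<sigma>, of k2] k by linarith
  then show "2 * ones (hyp_sample \<sigma> k2 x) \<le> length x"
    using x(2) k(4) hits(2) by (simp add: algebra_simps)
qed

lemma hypermutation_window:
  fixes a c :: real
  assumes "0 < c" "c < a" "8 * a \<le> real n * c"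
  defines "k1 \<equiv> nat \<lceil>real n * (a - c) / (2 * a - c)\<rceil>"
    and "k2 \<equiv> nat \<lfloor>real n * a / (2 * a - c)\<rfloor>"
  shows "1 \<le> k1" "k1 \<le> k2" "k2 \<le> n"
    and "real n * (a - c) / (2 * a - c) \<le> real k1" "real k2 \<le> real n * a / (2 * a - c)"
    and "real n * c / 8 \<le> a * (real n / 2 - real k1)" "real n * c / 8 \<le> a * (real k2 - real n / 2)"
proof -
  define L where "L = real n * (a - c) / (2 * a - c)"
  define U where "U = real n * a / (2 * a - c)"
  have "real n * c > 0"
    using assms(1-3) by linarith
  then have n: "real n > 0"
    using assms(1) by (simp add: zero_less_mult_iff)
  have "real n * c / (4 * a) \<le> real n * c / (2 * (2 * a - c))"
    using assms(1,2) n by (intro divide_left_mono) auto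
  then have "real n * c / 4 \<le> a * (real n * c / (2 * (2 * a - c)))"
    using assms(1,2) mult_left_mono[of _ _ a] by fastforce
  moreover have "real n / 2 - L = real n * c / (2 * (2 * a - c))" "U - real n / 2 = real n * c / (2 * (2 * a - c))"
    using assms(1,2) unfolding L_def U_def by (simp_all add: field_simps)
  ultimately have wide: "real n * c / 4 \<le> a * (real n / 2 - L)" "real n * c / 4 \<le> a * (U - real n / 2)"
    by simp_all
  have "L > 0" "U \<le> real n"
    using assms(1,2) n unfolding L_def U_def by (auto simp: field_simps)
  moreover have "a * (L + 1) \<le> a * U"
    using wide assms(1-3) by (simp add: algebra_simps)
  then have "L + 1 \<le> U"
    using assms(1,2) by simp
  ultimately show "1 \<le> k1" "k1 \<le> k2" "k2 \<le> n" "L \<le> real k1" "real k2 \<le> U"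
    unfolding k1_def k2_def L_def[symmetric] U_def[symmetric] by linarith+
  have "real k1 < L + 1" "U - 1 < real k2"
    unfolding k1_def k2_def L_def[symmetric] U_def[symmetric] using \<open>L > 0\<close> \<open>L + 1 \<le> U\<close> by linarith+
  then have "a * real k1 \<le> a * (L + 1)" "a * (U - 1) \<le> a * real k2"
    using assms(1,2) by simp_all
  then show "real n * c / 8 \<le> a * (real n / 2 - real k1)" "real n * c / 8 \<le> a * (real k2 - real n / 2)"
    using wide assms(3) by (simp_all add: algebra_simps)
qed

lemma prob_ge_1_minus_union_bound:
  assumes "\<And>x. x \<in> set_pmf p \<Longrightarrow> x \<notin> E1 \<Longrightarrow> x \<notin> E2 \<Longrightarrow> x \<in> G"
  shows "measure_pmf.prob p G \<ge> 1 - measure_pmf.prob p E1 - measure_pmf.prob p E2"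
proof -
  have "1 - measure_pmf.prob p G = measure_pmf.prob p (UNIV - G)"
    using measure_pmf.prob_compl[of G p] by simp
  also have "\<dots> \<le> measure_pmf.prob p (E1 \<union> E2)"
    using assms by (intro measure_pmf.finite_measure_mono_AE) (auto simp: AE_measure_pmf_iff)
  also have "\<dots> \<le> measure_pmf.prob p E1 + measure_pmf.prob p E2"
    by (rule measure_Un_le) auto
  finally show ?thesis
    by linarith
qed

lemma two_mult_exp_double_le:
  fixes y :: real
  assumes "ln 2 \<le> y"
  shows "2 * exp (- (2 * y)) \<le> exp (- y)"
proof -
  have "2 * exp (- y) \<le> 2 * exp (- ln 2)"
    using assms by simp
  then have "2 * exp (- y) * exp (- y) \<le> exp (- y)"
    by (simp add: exp_minus mult_left_le_one_le)
  then show ?thesis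
    by (simp add: mult.assoc exp_add[symmetric])
qed

lemma prob_hyp_sample_hits_half:
  fixes a c :: real
  assumes c: "0 < c" "c < a" "8 * a \<le> real n * c" "64 * ln 2 \<le> real n * c\<^sup>2"
    and x: "length x = n" "even n" "real (ones x) = (1/2 + a) * real n"
  shows "measure_pmf.prob (rand_perm n)
           {\<sigma>. \<exists>k. 1 \<le> k \<and> k \<le> n \<and> real n * (a - c) / (2 * a - c) \<le> real k \<and>
                real k \<le> real n * a / (2 * a - c) \<and> 2 * ones (hyp_sample \<sigma> k x) = n}
         \<ge> 1 - exp (- (1/64) * real n * c\<^sup>2)" (is "_ \<le> measure_pmf.prob _ ?G")
proof -
  define k1 where "k1 = nat \<lceil>real n * (a - c) / (2 * a - c)\<rceil>"
  define k2 where "k2 = nat \<lfloor>real n * a / (2 * a - c)\<rfloor>"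
  note window = hypermutation_window[OF c(1-3), folded k1_def k2_def]
  define t where "t = real n * c / 8"
  define E where "E B k = {\<sigma>. real (card (\<sigma> ` {..<k} \<inter> B))
                           \<ge> real k * (real (card ({..<n} \<inter> B)) / real n) + t}" for B k
  have n: "real n > 0" "t > 0"
    using window c(1) unfolding t_def by auto
  have E: "measure_pmf.prob (rand_perm n) (E B k) \<le> exp (- (1/32) * real n * c\<^sup>2)"
    if "0 < k" "k \<le> n" for B k
  proof -
    have "2 * t\<^sup>2 / real n \<le> 2 * t\<^sup>2 / real k"
      using that by (intro divide_left_mono) auto
    also have "2 * t\<^sup>2 / real n = (1/32) * real n * c\<^sup>2"
      unfolding t_def using n by (simp add: field_simps power2_eq_square)
    finally show ?thesis
      unfolding E_def by (intro order_trans[OF prob_rand_perm_image_Int_ge[OF that n(2)]]) simp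
  qed
  have density: "real (card ({..<n} \<inter> one_bits x)) / real n = 1/2 + a"
    "real (card ({..<n} \<inter> - one_bits x)) / real n = 1/2 - a"
    using x n(1) ones_le_length[of x] card_lessThan_Int_one_bits[of x, unfolded x(1)]
    by (simp_all add: of_nat_diff field_simps)
  have "measure_pmf.prob (rand_perm n) ?G
      \<ge> 1 - measure_pmf.prob (rand_perm n) (E (one_bits x) k1) - measure_pmf.prob (rand_perm n) (E (- one_bits x) k2)"
  proof (rule prob_ge_1_minus_union_bound)
    fix \<sigma> assume "\<sigma> \<in> set_pmf (rand_perm n)" "\<sigma> \<notin> E (one_bits x) k1" "\<sigma> \<notin> E (- one_bits x) k2"
    then have "\<sigma> permutes {..<length x}"
      "real (card (\<sigma> ` {..<k1} \<inter> one_bits x)) < real k1 * (1/2 + a) + t"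
      "real (card (\<sigma> ` {..<k2} \<inter> - one_bits x)) < real k2 * (1/2 - a) + t"
      using x(1) unfolding set_pmf_rand_perm E_def density by auto
    from hyp_sample_hits_half[OF this(1) x(2,3)[folded x(1)] window(2,3)[folded x(1)] _ _ this(2,3)]
    obtain k where "k1 \<le> k" "k \<le> k2" "2 * ones (hyp_sample \<sigma> k x) = n"
      using window(6,7) x(1) unfolding t_def by auto
    then show "\<sigma> \<in> ?G"
      using window(1-5) by (intro CollectI exI[of _ k]) auto
  qed
  moreover have "2 * exp (- (1/32) * real n * c\<^sup>2) \<le> exp (- (1/64) * real n * c\<^sup>2)"
    using two_mult_exp_double_le[of "real n * c\<^sup>2 / 64"] c(4) by (simp add: mult.commute)
  ultimately show ?thesis
    using E[of k1 "one_bits x"] E[of k2 "- one_bits x"] window(1-3) by linarith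
qed

lemma eventually_hypermutation_conditions:
  fixes a :: real and c :: "nat \<Rightarrow> real"
  assumes "\<forall>\<^sub>F n in sequentially. 0 < c n \<and> c n < a"
    and "(\<lambda>n. sqrt (ln (real n) / real n)) \<in> o(c)"
  shows "\<forall>\<^sub>F n in sequentially.
           0 < c n \<and> c n < a \<and> 8 * a \<le> real n * c n \<and> 64 * ln 2 \<le> real n * (c n)\<^sup>2"
proof -
  have "filterlim (\<lambda>n. ln (real n)) at_top sequentially"
    using filterlim_compose[OF ln_at_top filterlim_real_sequentially] by simp
  then have "\<forall>\<^sub>F n in sequentially. max (64 * ln 2) (8 * a\<^sup>2) \<le> ln (real n)"
    by (rule filterlim_at_top[THEN iffD1, rule_format])
  moreover have "\<forall>\<^sub>F n in sequentially. norm (sqrt (ln (real n) / real n)) \<le> 1 * norm (c n)"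
    using landau_o.smallD[OF assms(2) zero_less_one] .
  moreover have "\<forall>\<^sub>F n in sequentially. n > 0"
    by (rule eventually_gt_at_top)
  ultimately show ?thesis
    using assms(1)
  proof eventually_elim
    case (elim n)
    have "ln (real n) / real n \<le> (c n)\<^sup>2"
      using elim(2,4) by (intro sqrt_le_D) simp
    then have "ln (real n) \<le> real n * (c n)\<^sup>2"
      using elim(3) by (simp add: divide_le_eq mult.commute)
    then have large: "max (64 * ln 2) (8 * a\<^sup>2) \<le> real n * (c n)\<^sup>2"
      using elim(1) by linarith
    have "real n * c n * c n \<le> real n * c n * a"
      using elim(3,4) by (intro mult_left_mono) auto
    then have "8 * a * a \<le> real n * c n * a"
      using large by (simp add: power2_eq_square algebra_simps)
    then have "8 * a \<le> real n * c n"
      using elim(4) by simp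
    then show ?case
      using elim(4) large by simp
  qed
qed

theorem theorem3:
  fixes a :: real and c :: "nat \<Rightarrow> real"
  assumes "a > 0"
    and "\<forall>\<^sub>F n in sequentially. 0 < c n \<and> c n < a"
    and "(\<lambda>n. sqrt (ln (real n) / real n)) \<in> o(c)"
  shows "\<exists>C>0. \<forall>\<^sub>F n in sequentially. \<forall>x :: bool list.
           length x = n \<and> even n \<and> real (ones x) = (1/2 + a) * real n \<longrightarrow>
           measure_pmf.prob (rand_perm n)
             {\<sigma>. \<exists>k. 1 \<le> k \<and> k \<le> n \<and>
                  real n * (a - c n) / (2 * a - c n) \<le> real k \<and>
                  real k \<le> real n * a / (2 * a - c n) \<and>
                  2 * ones (hyp_sample \<sigma> k x) = n}
           \<ge> 1 - exp (- C * real n * (c n)\<^sup>2)"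
proof (intro exI[of _ "1/64"] conjI)
  show "\<forall>\<^sub>F n in sequentially. \<forall>x :: bool list.
           length x = n \<and> even n \<and> real (ones x) = (1/2 + a) * real n \<longrightarrow>
           measure_pmf.prob (rand_perm n)
             {\<sigma>. \<exists>k. 1 \<le> k \<and> k \<le> n \<and>
                  real n * (a - c n) / (2 * a - c n) \<le> real k \<and>
                  real k \<le> real n * a / (2 * a - c n) \<and>
                  2 * ones (hyp_sample \<sigma> k x) = n}
           \<ge> 1 - exp (- (1/64) * real n * (c n)\<^sup>2)"
    using eventually_hypermutation_conditions[OF assms(2,3)]
    by eventually_elim (use prob_hyp_sample_hits_half in blast)
qed simp

end
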